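(* Let $(L,\wedge,\vee,0,1)$ be a bounded lattice and for $x,y\in L$ set $x\boxdot y:=\{z\in L\mid x\wedge y=x\wedge z=z\wedge y\}$. Then $(L,\boxdot,1)$ is a commutative, total and reproductive mosaic, in which the inverse of each $x\in L$ is $x$ itself. Moreover, $0$ is the unique element $z\in L$ such that for all $x\in L$: $z\in x\boxdot x$ implies $x=z$.
   Context: A multioperation on a set $A$ is a function $\boxdot:A\times A\to\wp(A)$; for $x\in A$ and $Y\subseteq A$, $x\boxdot Y:=\bigcup_{y\in Y}x\boxdot y$. It is total if $x\boxdot y\ne\emptyset$ for all $x,y$; commutative if $x\boxdot y=y\boxdot x$; reproductive if $x\boxdot A=A$ for all $x\in A$. A neutral element $e$ satisfies $e\boxdot x=x\boxdot e=\{x\}$ for all $x$. For an endofunction $\rho$, $\rho$-reversibility means: $z\in x\boxdot y$ implies $x\in z\boxdot\rho(y)$ and $y\in\rho(x)\boxdot z$. A mosaic $(A,\boxdot,e)$ is a set with a multioperation with neutral element $e$ that is $\rho$-reversible for some endofunction $\rho$. An inverse of $x$ is an element $y$ with $e\in(x\boxdot y)\cap(y\boxdot x)$. *)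

theory Defs
  imports Main
begin

definition multiop_on :: "'a set \<Rightarrow> ('a \<Rightarrow> 'a \<Rightarrow> 'a set) \<Rightarrow> bool" where
  "multiop_on A m \<longleftrightarrow> (\<forall>x\<in>A. \<forall>y\<in>A. m x y \<subseteq> A)"

definition mop_set :: "('a \<Rightarrow> 'a \<Rightarrow> 'a set) \<Rightarrow> 'a \<Rightarrow> 'a set \<Rightarrow> 'a set" where
  "mop_set m x Y = (\<Union>y\<in>Y. m x y)"

definition mop_total_on :: "'a set \<Rightarrow> ('a \<Rightarrow> 'a \<Rightarrow> 'a set) \<Rightarrow> bool" where
  "mop_total_on A m \<longleftrightarrow> (\<forall>x\<in>A. \<forall>y\<in>A. m x y \<noteq> {})"

definition commutative_on :: "'a set \<Rightarrow> ('a \<Rightarrow> 'a \<Rightarrow> 'a set) \<Rightarrow> bool" where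
  "commutative_on A m \<longleftrightarrow> (\<forall>x\<in>A. \<forall>y\<in>A. m x y = m y x)"

definition reproductive_on :: "'a set \<Rightarrow> ('a \<Rightarrow> 'a \<Rightarrow> 'a set) \<Rightarrow> bool" where
  "reproductive_on A m \<longleftrightarrow> (\<forall>x\<in>A. mop_set m x A = A)"

definition neutral_on :: "'a set \<Rightarrow> ('a \<Rightarrow> 'a \<Rightarrow> 'a set) \<Rightarrow> 'a \<Rightarrow> bool" where
  "neutral_on A m e \<longleftrightarrow> e \<in> A \<and> (\<forall>x\<in>A. m e x = {x} \<and> m x e = {x})"

definition reversible_on :: "'a set \<Rightarrow> ('a \<Rightarrow> 'a \<Rightarrow> 'a set) \<Rightarrow> ('a \<Rightarrow> 'a) \<Rightarrow> bool" where
  "reversible_on A m \<rho> \<longleftrightarrow>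
     (\<forall>x\<in>A. \<forall>y\<in>A. \<forall>z\<in>A. z \<in> m x y \<longrightarrow> x \<in> m z (\<rho> y) \<and> y \<in> m (\<rho> x) z)"

definition mosaic :: "'a set \<Rightarrow> ('a \<Rightarrow> 'a \<Rightarrow> 'a set) \<Rightarrow> 'a \<Rightarrow> bool" where
  "mosaic A m e \<longleftrightarrow> multiop_on A m \<and> neutral_on A m e \<and>
     (\<exists>\<rho>. (\<forall>x\<in>A. \<rho> x \<in> A) \<and> reversible_on A m \<rho>)"

definition is_inverse :: "('a \<Rightarrow> 'a \<Rightarrow> 'a set) \<Rightarrow> 'a \<Rightarrow> 'a \<Rightarrow> 'a \<Rightarrow> bool" where
  "is_inverse m e x y \<longleftrightarrow> e \<in> m x y \<inter> m y x"

definition lat_mop :: "'a::bounded_lattice \<Rightarrow> 'a \<Rightarrow> 'a set" where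
  "lat_mop x y = {z. inf x y = inf x z \<and> inf x z = inf z y}"

end

theory Submission
  imports Defs
begin

text \<open>The condition z \<in> lat_mop x y says that the three pairwise meets of x, y, z coincide.
  It is symmetric in x, y, z, which gives commutativity and reversibility with \<rho> = id, and
  z \<in> lat_mop x y holds whenever z is the common meet x \<sqinter> y, which gives totality and
  reproductivity. For y = x it reduces to x \<le> z: so top is neutral and self-inverse, and every z lies in
  lat_mop bot bot, which singles out bot in the final claim.\<close>

lemma mem_lat_mop: "z \<in> lat_mop x y \<longleftrightarrow> inf x y = inf x z \<and> inf x z = inf z y"
  by (simp add: lat_mop_def)

lemma lat_mop_commute: "lat_mop x y = lat_mop y x"
  by (auto simp: mem_lat_mop inf_commute)

lemma mem_lat_mop_swap: "z \<in> lat_mop x y \<longleftrightarrow> x \<in> lat_mop z y"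
  by (auto simp: mem_lat_mop inf_commute)

lemma mem_lat_mop_self_iff: "z \<in> lat_mop x x \<longleftrightarrow> x \<le> z"
  by (auto simp: mem_lat_mop inf_commute le_iff_inf)

lemma inf_mem_lat_mop: "inf x y \<in> lat_mop x y"
  by (auto simp: mem_lat_mop inf_commute inf_left_commute)

lemma top_lat_mop: "lat_mop top x = {x}"
  by (auto simp: mem_lat_mop)

lemma top_mem_lat_mop_iff: "top \<in> lat_mop x y \<longleftrightarrow> y = x"
  by (auto simp: mem_lat_mop inf_commute)

lemma neutral_on_lat_mop: "neutral_on UNIV lat_mop top"
  by (simp add: neutral_on_def top_lat_mop lat_mop_commute[of _ top])

lemma reversible_on_lat_mop: "reversible_on UNIV lat_mop id"
  unfolding reversible_on_def
  by (metis id_apply lat_mop_commute mem_lat_mop_swap)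

lemma mosaic_lat_mop: "mosaic UNIV lat_mop top"
  unfolding mosaic_def multiop_on_def using neutral_on_lat_mop reversible_on_lat_mop by blast

lemma reproductive_on_lat_mop: "reproductive_on UNIV lat_mop"
  unfolding reproductive_on_def mop_set_def
proof (intro ballI equalityI subsetI)
  fix x z :: 'a
  have "z \<in> lat_mop x (inf x z)"
    using inf_mem_lat_mop[of x z] by (simp add: mem_lat_mop_swap lat_mop_commute)
  then show "z \<in> (\<Union>y\<in>UNIV. lat_mop x y)" by blast
qed auto

theorem mainTheorem5:
  shows "mosaic (UNIV :: 'a::bounded_lattice set) lat_mop top
       \<and> commutative_on (UNIV :: 'a set) lat_mop
       \<and> mop_total_on (UNIV :: 'a set) lat_mop
       \<and> reproductive_on (UNIV :: 'a set) lat_mop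
       \<and> (\<forall>x y :: 'a. is_inverse lat_mop top x y \<longleftrightarrow> y = x)
       \<and> (\<forall>x :: 'a. bot \<in> lat_mop x x \<longrightarrow> x = bot)
       \<and> (\<forall>z :: 'a. (\<forall>x. z \<in> lat_mop x x \<longrightarrow> x = z) \<longrightarrow> z = bot)"
proof (intro conjI allI impI)
  show "commutative_on (UNIV :: 'a set) lat_mop"
    by (simp add: commutative_on_def lat_mop_commute)
  show "mop_total_on (UNIV :: 'a set) lat_mop"
    unfolding mop_total_on_def using inf_mem_lat_mop by blast
  show "is_inverse lat_mop top x y \<longleftrightarrow> y = x" for x y :: 'a
    by (auto simp: is_inverse_def top_mem_lat_mop_iff)
  show "x = bot" if "bot \<in> lat_mop x x" for x :: 'a
    using that by (simp add: mem_lat_mop_self_iff bot_unique)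
  show "z = bot" if "\<forall>x. z \<in> lat_mop x x \<longrightarrow> x = z" for z :: 'a
    using that[rule_format, of bot] by (simp add: mem_lat_mop_self_iff)
qed (fact mosaic_lat_mop reproductive_on_lat_mop)+

end
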